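(* Let $\mathsf{\Omega}$ be a first-quantized BRST operator of a linear Lagrangian gauge system (odd, of ghost number $1$, nilpotent, and symplectic). For every ghost number $g$, the BRST state cohomology $H^g(\mathsf{\Omega})$ is a module, with the action $[A]\cdot[\phi]=[A\phi]$, of any Lie subalgebra of $H^{0}_{\rm sym}([\mathsf{\Omega},\cdot])$, and thus of any subalgebra of the Lie algebra of equivalence classes of linear variational symmetries.
   Context: Wave functions $\phi=e_\alpha\phi^\alpha(x)$ take values in a superspace with basis elements $e_\alpha$ graded by ghost number and parity, equipped with a constant nondegenerate odd antisymplectic form $\omega(\phi,\chi)=\int d^dx\,\omega_{\alpha\beta}\phi^\alpha\chi^\beta$, $\omega(\phi,\chi)=-(-1)^{|\phi||\chi|}\omega(\chi,\phi)$. A linear differential operator $A$ is symplectic if $\omega(A\phi,\chi)+(-1)^{|A||\phi|}\omega(\phi,A\chi)=0$. $\mathsf{\Omega}$ is odd, of ghost number $1$, symplectic, with $\mathsf{\Omega}^2=0$. $H^g(\mathsf{\Omega})$ is the space of ghost-number-$g$ wave functions $\phi$ with $\mathsf{\Omega}\phi=0$ modulo those of the form $\mathsf{\Omega}\chi$. $H^0_{\rm sym}([\mathsf{\Omega},\cdot])$ is the space of ghost-number-$0$ symplectic operators $K$ with $[\mathsf{\Omega},K]=0$ modulo $[\mathsf{\Omega},T]$ with $T$ symplectic of ghost number $-1$; with the commutator it is a Lie algebra isomorphic to the Lie algebra of equivalence classes of linear variational symmetries. *)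

theory Defs
  imports Complex_Main
begin

text \<open>Abstract model of the space of wave functions: a real vector space 'v with
  ghost-number homogeneous subspaces Vg g (g :: int) and parity homogeneous subspaces
  P p (p :: bool, True = odd), and an odd antisymplectic bilinear form om.
  Linear (differential) operators are modelled as linear maps 'v \<Rightarrow> 'v.\<close>

definition psign :: "bool \<Rightarrow> bool \<Rightarrow> real" where
  "psign p q = (if p \<and> q then -1 else 1)"

definition superspace ::
  "(int \<Rightarrow> 'v::real_vector set) \<Rightarrow> (bool \<Rightarrow> 'v set) \<Rightarrow> ('v \<Rightarrow> 'v \<Rightarrow> real) \<Rightarrow> bool" where
  "superspace Vg P om \<longleftrightarrow>
     (\<forall>g. subspace (Vg g)) \<and> (\<forall>p. subspace (P p)) \<and>
     span (\<Union>g. \<Union>p. Vg g \<inter> P p) = UNIV \<and>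
     (\<forall>x. linear (om x)) \<and> (\<forall>y. linear (\<lambda>x. om x y)) \<and>
     (\<forall>p q x y. x \<in> P p \<longrightarrow> y \<in> P q \<longrightarrow> om x y = - psign p q * om y x) \<and>
     (\<forall>p q x y. x \<in> P p \<longrightarrow> y \<in> P q \<longrightarrow> om x y \<noteq> 0 \<longrightarrow> p \<noteq> q) \<and>
     (\<forall>x. (\<forall>y. om x y = 0) \<longrightarrow> x = 0)"

definition op_ghost :: "(int \<Rightarrow> 'v set) \<Rightarrow> int \<Rightarrow> ('v \<Rightarrow> 'v) \<Rightarrow> bool" where
  "op_ghost Vg k A \<longleftrightarrow> (\<forall>g. \<forall>x\<in>Vg g. A x \<in> Vg (g + k))"

definition op_parity :: "(bool \<Rightarrow> 'v set) \<Rightarrow> bool \<Rightarrow> ('v \<Rightarrow> 'v) \<Rightarrow> bool" where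
  "op_parity P p A \<longleftrightarrow> (\<forall>q. \<forall>x\<in>P q. A x \<in> P (p \<noteq> q))"

definition symplectic ::
  "(bool \<Rightarrow> 'v set) \<Rightarrow> ('v \<Rightarrow> 'v \<Rightarrow> real) \<Rightarrow> bool \<Rightarrow> ('v \<Rightarrow> 'v) \<Rightarrow> bool" where
  "symplectic P om p A \<longleftrightarrow>
     (\<forall>q x y. x \<in> P q \<longrightarrow> om (A x) y + psign p q * om x (A y) = 0)"

definition scomm :: "bool \<Rightarrow> bool \<Rightarrow> ('v::real_vector \<Rightarrow> 'v) \<Rightarrow> ('v \<Rightarrow> 'v) \<Rightarrow> 'v \<Rightarrow> 'v" where
  "scomm pA pB A B = (\<lambda>x. A (B x) - psign pA pB *\<^sub>R B (A x))"

definition brst_op ::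
  "(int \<Rightarrow> 'v::real_vector set) \<Rightarrow> (bool \<Rightarrow> 'v set) \<Rightarrow> ('v \<Rightarrow> 'v \<Rightarrow> real) \<Rightarrow> ('v \<Rightarrow> 'v) \<Rightarrow> bool" where
  "brst_op Vg P om Om \<longleftrightarrow> linear Om \<and> op_ghost Vg 1 Om \<and> op_parity P True Om \<and>
     symplectic P om True Om \<and> (\<forall>x. Om (Om x) = 0)"

definition closed_st :: "(int \<Rightarrow> 'v::real_vector set) \<Rightarrow> ('v \<Rightarrow> 'v) \<Rightarrow> int \<Rightarrow> 'v \<Rightarrow> bool" where
  "closed_st Vg Om g x \<longleftrightarrow> x \<in> Vg g \<and> Om x = 0"

definition exact_st :: "(int \<Rightarrow> 'v::real_vector set) \<Rightarrow> ('v \<Rightarrow> 'v) \<Rightarrow> int \<Rightarrow> 'v \<Rightarrow> bool" where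
  "exact_st Vg Om g x \<longleftrightarrow> (\<exists>y\<in>Vg (g - 1). x = Om y)"

definition coh_eq :: "(int \<Rightarrow> 'v::real_vector set) \<Rightarrow> ('v \<Rightarrow> 'v) \<Rightarrow> int \<Rightarrow> 'v \<Rightarrow> 'v \<Rightarrow> bool" where
  "coh_eq Vg Om g x y \<longleftrightarrow> closed_st Vg Om g x \<and> closed_st Vg Om g y \<and> exact_st Vg Om g (x - y)"

text \<open>Representatives of H^0_sym([Om,.]): even ghost-number-0 symplectic K with [Om,K] = 0.\<close>
definition Zsym ::
  "(int \<Rightarrow> 'v::real_vector set) \<Rightarrow> (bool \<Rightarrow> 'v set) \<Rightarrow> ('v \<Rightarrow> 'v \<Rightarrow> real) \<Rightarrow> ('v \<Rightarrow> 'v) \<Rightarrow> ('v \<Rightarrow> 'v) \<Rightarrow> bool" where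
  "Zsym Vg P om Om K \<longleftrightarrow> linear K \<and> op_ghost Vg 0 K \<and> op_parity P False K \<and>
     symplectic P om False K \<and> (\<forall>x. scomm True False Om K x = 0)"

definition Bsym ::
  "(int \<Rightarrow> 'v::real_vector set) \<Rightarrow> (bool \<Rightarrow> 'v set) \<Rightarrow> ('v \<Rightarrow> 'v \<Rightarrow> real) \<Rightarrow> ('v \<Rightarrow> 'v) \<Rightarrow> ('v \<Rightarrow> 'v) \<Rightarrow> bool" where
  "Bsym Vg P om Om K \<longleftrightarrow> (\<exists>T. linear T \<and> op_ghost Vg (-1) T \<and> op_parity P True T \<and>
     symplectic P om True T \<and> (\<forall>x. K x = scomm True True Om T x))"

definition sym_eq ::
  "(int \<Rightarrow> 'v::real_vector set) \<Rightarrow> (bool \<Rightarrow> 'v set) \<Rightarrow> ('v \<Rightarrow> 'v \<Rightarrow> real) \<Rightarrow> ('v \<Rightarrow> 'v) \<Rightarrow> ('v \<Rightarrow> 'v) \<Rightarrow> ('v \<Rightarrow> 'v) \<Rightarrow> bool" where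
  "sym_eq Vg P om Om K K' \<longleftrightarrow> Zsym Vg P om Om K \<and> Zsym Vg P om Om K' \<and>
     Bsym Vg P om Om (\<lambda>x. K x - K' x)"

end

theory Submission
  imports Defs
begin

text \<open>Every K in Zsym commutes with Om, so it maps closed states to closed states and
  exact states to exact states; a trivial K = [Om,T] sends a closed state y to
  Om (T y), which is exact. Hence [K].[x] = [K x] is well defined, and it is a Lie
  module action because the commutator of two elements of Zsym lies in Zsym again
  (the symplectic condition and [Om,.] = 0 are both preserved by commutators of even
  operators) and acts on states literally as K1 K2 - K2 K1.\<close>

lemma scomm_even_right [simp]: "scomm p False A B = (\<lambda>x. A (B x) - B (A x))"
  unfolding scomm_def psign_def by simp

lemma scomm_odd_odd [simp]: "scomm True True A B = (\<lambda>x. A (B x) + B (A x))"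
  unfolding scomm_def psign_def by simp

lemma symplectic_even_iff:
  "symplectic P om False A \<longleftrightarrow> (\<forall>q x y. x \<in> P q \<longrightarrow> om (A x) y = - om x (A y))"
  unfolding symplectic_def psign_def by (simp add: eq_neg_iff_add_eq_0)

lemma Zsym_commutes:
  assumes "Zsym Vg P om Om K"
  shows "Om (K x) = K (Om x)"
  using assms unfolding Zsym_def by simp

lemma Bsym_homotopy:
  assumes "Bsym Vg P om Om D"
  obtains T where "linear T" "op_ghost Vg (-1) T" "\<And>x. D x = Om (T x) + T (Om x)"
  using assms unfolding Bsym_def by auto

lemma op_ghost_commutator:
  assumes "\<And>g. subspace (Vg g)" "op_ghost Vg k A" "op_ghost Vg l B"
  shows "op_ghost Vg (k + l) (\<lambda>x. A (B x) - B (A x))"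
  unfolding op_ghost_def
proof (intro allI ballI)
  fix g x assume "x \<in> Vg g"
  then have "A (B x) \<in> Vg (g + l + k)" "B (A x) \<in> Vg (g + k + l)"
    using assms(2,3) unfolding op_ghost_def by blast+
  then have "A (B x) \<in> Vg (g + (k + l))" "B (A x) \<in> Vg (g + (k + l))"
    by (simp_all add: ac_simps)
  then show "A (B x) - B (A x) \<in> Vg (g + (k + l))" using assms(1) by (simp add: subspace_diff)
qed

lemma op_parity_commutator:
  assumes "\<And>p. subspace (P p)" "op_parity P p A" "op_parity P q B"
  shows "op_parity P (p \<noteq> q) (\<lambda>x. A (B x) - B (A x))"
  unfolding op_parity_def
proof (intro allI ballI)
  fix r x assume "x \<in> P r"
  then have "A (B x) \<in> P (p \<noteq> (q \<noteq> r))" "B (A x) \<in> P (q \<noteq> (p \<noteq> r))"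
    using assms(2,3) unfolding op_parity_def by blast+
  moreover have "(p \<noteq> (q \<noteq> r)) = ((p \<noteq> q) \<noteq> r)" "(q \<noteq> (p \<noteq> r)) = ((p \<noteq> q) \<noteq> r)" by auto
  ultimately show "A (B x) - B (A x) \<in> P ((p \<noteq> q) \<noteq> r)" using assms(1) by (simp add: subspace_diff)
qed

lemma symplectic_even_commutator:
  assumes bilinear: "\<And>x. linear (om x)" "\<And>y. linear (\<lambda>x. om x y)"
    and even: "op_parity P False A" "op_parity P False B"
    and sympl: "symplectic P om False A" "symplectic P om False B"
  shows "symplectic P om False (\<lambda>x. A (B x) - B (A x))"
  unfolding symplectic_even_iff
proof (intro allI impI)
  fix q x y assume x: "x \<in> P q"
  have A: "om (A u) v = - om u (A v)" and B: "om (B u) v = - om u (B v)" if "u \<in> P q" for u v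
    using sympl that unfolding symplectic_even_iff by blast+
  have "A x \<in> P q" "B x \<in> P q" using even x unfolding op_parity_def by force+
  then have "om (A (B x)) y = om x (B (A y))" "om (B (A x)) y = om x (A (B y))"
    using A B x by simp_all
  then show "om (A (B x) - B (A x)) y = - om x (A (B y) - B (A y))"
    using linear_diff[OF bilinear(1)] linear_diff[OF bilinear(2)] by simp
qed

lemma Zsym_commutator:
  assumes "superspace Vg P om" "brst_op Vg P om Om"
    and "Zsym Vg P om Om K1" "Zsym Vg P om Om K2"
  shows "Zsym Vg P om Om (scomm False False K1 K2)"
proof -
  have sub: "\<And>g. subspace (Vg g)" "\<And>p. subspace (P p)"
    and bilinear: "\<And>x. linear (om x)" "\<And>y. linear (\<lambda>x. om x y)"
    using assms(1) unfolding superspace_def by auto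
  have "linear Om" using assms(2) unfolding brst_op_def by simp
  then have "Om (K1 (K2 x) - K2 (K1 x)) = K1 (K2 (Om x)) - K2 (K1 (Om x))" for x
    using Zsym_commutes[OF assms(3)] Zsym_commutes[OF assms(4)] by (simp add: linear_diff)
  moreover have "linear (\<lambda>x. K1 (K2 x) - K2 (K1 x))"
    using assms(3,4) unfolding Zsym_def
    by (intro linear_compose_sub) (auto intro: linear_compose[unfolded o_def])
  moreover have "op_ghost Vg 0 (\<lambda>x. K1 (K2 x) - K2 (K1 x))"
    using op_ghost_commutator[where Vg=Vg and k=0 and l=0, OF sub(1)] assms(3,4) unfolding Zsym_def by simp
  moreover have "op_parity P False (\<lambda>x. K1 (K2 x) - K2 (K1 x))"
    using op_parity_commutator[where P=P and p=False and q=False, OF sub(2)] assms(3,4)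
    unfolding Zsym_def by simp
  moreover have "symplectic P om False (\<lambda>x. K1 (K2 x) - K2 (K1 x))"
    using symplectic_even_commutator[OF bilinear] assms(3,4) unfolding Zsym_def by blast
  ultimately show ?thesis unfolding Zsym_def by simp
qed

lemma closed_st_Zsym:
  assumes "Zsym Vg P om Om K" "closed_st Vg Om g x"
  shows "closed_st Vg Om g (K x)"
proof -
  have "K x \<in> Vg (g + 0)"
    using assms unfolding Zsym_def op_ghost_def closed_st_def by blast
  moreover have "Om (K x) = 0"
    using Zsym_commutes[OF assms(1)] assms unfolding Zsym_def closed_st_def by (metis linear_0)
  ultimately show ?thesis unfolding closed_st_def by simp
qed

lemma closed_st_lincomb:
  assumes "subspace (Vg g)" "linear Om" "closed_st Vg Om g x" "closed_st Vg Om g y"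
  shows "closed_st Vg Om g (a *\<^sub>R x + b *\<^sub>R y)"
  using assms unfolding closed_st_def
  by (simp add: subspace_add subspace_scale linear_add linear_scale)

lemma exact_st_add:
  assumes "subspace (Vg (g - 1))" "linear Om" "exact_st Vg Om g x" "exact_st Vg Om g y"
  shows "exact_st Vg Om g (x + y)"
  using assms unfolding exact_st_def by (metis linear_add subspace_add)

lemma exact_st_Zsym:
  assumes "Zsym Vg P om Om K" "exact_st Vg Om g x"
  shows "exact_st Vg Om g (K x)"
proof -
  obtain z where "z \<in> Vg (g - 1)" "x = Om z" using assms(2) unfolding exact_st_def by blast
  moreover have "K z \<in> Vg (g - 1)" using assms(1) \<open>z \<in> Vg (g - 1)\<close>
    unfolding Zsym_def op_ghost_def by force
  ultimately show ?thesis using Zsym_commutes[OF assms(1)] unfolding exact_st_def by metis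
qed

lemma exact_st_Bsym:
  assumes "Bsym Vg P om Om D" "closed_st Vg Om g y"
  shows "exact_st Vg Om g (D y)"
proof -
  obtain T where T: "linear T" "op_ghost Vg (-1) T" "\<And>x. D x = Om (T x) + T (Om x)"
    using Bsym_homotopy[OF assms(1)] by blast
  have "T y \<in> Vg (g - 1)" using T(2) assms(2) unfolding op_ghost_def closed_st_def by force
  moreover have "D y = Om (T y)" using T(1,3) assms(2) unfolding closed_st_def by (simp add: linear_0)
  ultimately show ?thesis unfolding exact_st_def by blast
qed

lemma coh_eq_refl:
  assumes "subspace (Vg (g - 1))" "linear Om" "closed_st Vg Om g x"
  shows "coh_eq Vg Om g x x"
  using assms unfolding coh_eq_def exact_st_def by (metis diff_self linear_0 subspace_0)

lemma coh_eq_action: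
  assumes "subspace (Vg (g - 1))" "linear Om"
    and "sym_eq Vg P om Om K K'" "coh_eq Vg Om g x y"
  shows "coh_eq Vg Om g (K x) (K' y)"
proof -
  have K: "Zsym Vg P om Om K" "Zsym Vg P om Om K'" and D: "Bsym Vg P om Om (\<lambda>x. K x - K' x)"
    using assms(3) unfolding sym_eq_def by auto
  have x: "closed_st Vg Om g x" and y: "closed_st Vg Om g y" and "exact_st Vg Om g (x - y)"
    using assms(4) unfolding coh_eq_def by auto
  then have "exact_st Vg Om g (K (x - y) + (K y - K' y))"
    using exact_st_add[where Vg=Vg and g=g, OF assms(1,2)] exact_st_Zsym[OF K(1)] exact_st_Bsym[OF D] by blast
  moreover have "K (x - y) + (K y - K' y) = K x - K' y"
    using K(1) unfolding Zsym_def by (simp add: linear_diff)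
  ultimately show ?thesis
    using closed_st_Zsym[OF K(1) x] closed_st_Zsym[OF K(2) y] unfolding coh_eq_def by simp
qed

lemma coh_eq_Zsym_lincomb:
  assumes sub: "\<And>g. subspace (Vg g)" and Om: "linear Om"
    and K: "Zsym Vg P om Om K" and "closed_st Vg Om g x" "closed_st Vg Om g y"
  shows "coh_eq Vg Om g (K (a *\<^sub>R x + b *\<^sub>R y)) (a *\<^sub>R K x + b *\<^sub>R K y)"
proof -
  have "closed_st Vg Om g (K (a *\<^sub>R x + b *\<^sub>R y))"
    using assms(4,5) by (intro closed_st_Zsym[OF K] closed_st_lincomb[OF sub Om])
  then have "coh_eq Vg Om g (K (a *\<^sub>R x + b *\<^sub>R y)) (K (a *\<^sub>R x + b *\<^sub>R y))"
    by (rule coh_eq_refl[OF sub Om])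
  moreover have "K (a *\<^sub>R x + b *\<^sub>R y) = a *\<^sub>R K x + b *\<^sub>R K y"
    using K unfolding Zsym_def by (simp add: linear_add linear_scale)
  ultimately show ?thesis by simp
qed

lemma coh_eq_Zsym_commutator:
  assumes "superspace Vg P om" "brst_op Vg P om Om"
    and "Zsym Vg P om Om K1" "Zsym Vg P om Om K2" "closed_st Vg Om g x"
  shows "coh_eq Vg Om g (scomm False False K1 K2 x) (K1 (K2 x) - K2 (K1 x))"
proof -
  have "subspace (Vg (g - 1))" using assms(1) unfolding superspace_def by simp
  moreover have "linear Om" using assms(2) unfolding brst_op_def by simp
  moreover have "closed_st Vg Om g (scomm False False K1 K2 x)"
    by (rule closed_st_Zsym[OF Zsym_commutator[OF assms(1-4)] assms(5)])
  ultimately show ?thesis unfolding scomm_even_right by (rule coh_eq_refl)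
qed

theorem proposition3:
  fixes Vg :: "int \<Rightarrow> 'v::real_vector set" and P :: "bool \<Rightarrow> 'v set"
    and om :: "'v \<Rightarrow> 'v \<Rightarrow> real" and Om :: "'v \<Rightarrow> 'v" and g :: int
  assumes "superspace Vg P om"
    and "brst_op Vg P om Om"
  shows
    \<comment> \<open>representatives of H^0_sym form a Lie algebra under the commutator\<close>
    "(\<forall>K1 K2. Zsym Vg P om Om K1 \<longrightarrow> Zsym Vg P om Om K2 \<longrightarrow>
        Zsym Vg P om Om (scomm False False K1 K2))
   \<comment> \<open>the action maps closed ghost-number-g states to closed ghost-number-g states\<close>
   \<and> (\<forall>K x. Zsym Vg P om Om K \<longrightarrow> closed_st Vg Om g x \<longrightarrow> closed_st Vg Om g (K x))
   \<comment> \<open>well-definedness of [K].[x] = [K x] on classes\<close>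
   \<and> (\<forall>K K' x y. sym_eq Vg P om Om K K' \<longrightarrow> coh_eq Vg Om g x y
        \<longrightarrow> coh_eq Vg Om g (K x) (K' y))
   \<comment> \<open>linearity of the action in the state\<close>
   \<and> (\<forall>K x y a b. Zsym Vg P om Om K \<longrightarrow> closed_st Vg Om g x \<longrightarrow> closed_st Vg Om g y \<longrightarrow>
        coh_eq Vg Om g (K (a *\<^sub>R x + b *\<^sub>R y)) (a *\<^sub>R K x + b *\<^sub>R K y))
   \<comment> \<open>Lie module property: [[K1],[K2]].[x] = [K1].([K2].[x]) - [K2].([K1].[x])\<close>
   \<and> (\<forall>K1 K2 x. Zsym Vg P om Om K1 \<longrightarrow> Zsym Vg P om Om K2 \<longrightarrow> closed_st Vg Om g x \<longrightarrow>
        coh_eq Vg Om g (scomm False False K1 K2 x) (K1 (K2 x) - K2 (K1 x)))"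
proof -
  have sub: "\<And>g. subspace (Vg g)" using assms(1) unfolding superspace_def by simp
  have Om: "linear Om" using assms(2) unfolding brst_op_def by simp
  show ?thesis
  proof (intro conjI allI impI)
    show "Zsym Vg P om Om (scomm False False K1 K2)"
      if "Zsym Vg P om Om K1" "Zsym Vg P om Om K2" for K1 K2
      using Zsym_commutator[OF assms that] .
    show "closed_st Vg Om g (K x)" if "Zsym Vg P om Om K" "closed_st Vg Om g x" for K x
      using closed_st_Zsym[OF that] .
    show "coh_eq Vg Om g (K x) (K' y)"
      if "sym_eq Vg P om Om K K'" "coh_eq Vg Om g x y" for K K' x y
      using coh_eq_action[OF sub Om that] .
    show "coh_eq Vg Om g (K (a *\<^sub>R x + b *\<^sub>R y)) (a *\<^sub>R K x + b *\<^sub>R K y)"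
      if "Zsym Vg P om Om K" "closed_st Vg Om g x" "closed_st Vg Om g y" for K x y a b
      using coh_eq_Zsym_lincomb[OF sub Om that] .
    show "coh_eq Vg Om g (scomm False False K1 K2 x) (K1 (K2 x) - K2 (K1 x))"
      if "Zsym Vg P om Om K1" "Zsym Vg P om Om K2" "closed_st Vg Om g x" for K1 K2 x
      using coh_eq_Zsym_commutator[OF assms that] .
  qed
qed

end
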